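(* The Hoffman–Singleton graph $HS$ satisfies $\alpha_{\mathrm{od}}(HS)=15$ and $\chi_{\mathrm{so}}(HS)\le20$. Moreover, $HS$ has no odd independent set with exactly $k$ vertices for any $k$ with $11\le k\le14$.
   Context: The Hoffman–Singleton graph is the (unique) $7$-regular graph on $50$ vertices with diameter $2$ and girth $5$. An odd independent set in $G=(V,E)$ is an independent set $S$ such that every $v\in V\setminus S$ has either no neighbor or an odd number of neighbors in $S$; $\alpha_{\mathrm{od}}(G)$ is its maximum size. A strong odd coloring is a proper coloring such that for each vertex $v$ every color on $N(v)$ occurs an odd number of times on $N(v)$; $\chi_{\mathrm{so}}(G)$ is the minimum number of colors. *)

theory Defs
  imports Main
begin

(* Simple graphs: finite vertex set V, symmetric irreflexive adjacency E. *)

definition nbhd :: "'a set \<Rightarrow> ('a \<Rightarrow> 'a \<Rightarrow> bool) \<Rightarrow> 'a \<Rightarrow> 'a set" where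
  "nbhd V E v = {u \<in> V. E v u}"

definition independent :: "'a set \<Rightarrow> ('a \<Rightarrow> 'a \<Rightarrow> bool) \<Rightarrow> 'a set \<Rightarrow> bool" where
  "independent V E S \<longleftrightarrow> S \<subseteq> V \<and> (\<forall>u\<in>S. \<forall>v\<in>S. \<not> E u v)"

definition odd_independent :: "'a set \<Rightarrow> ('a \<Rightarrow> 'a \<Rightarrow> bool) \<Rightarrow> 'a set \<Rightarrow> bool" where
  "odd_independent V E S \<longleftrightarrow> independent V E S \<and>
     (\<forall>v \<in> V - S. card (nbhd V E v \<inter> S) = 0 \<or> odd (card (nbhd V E v \<inter> S)))"

definition alpha_od :: "'a set \<Rightarrow> ('a \<Rightarrow> 'a \<Rightarrow> bool) \<Rightarrow> nat" where
  "alpha_od V E = Max {card S | S. odd_independent V E S}"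

definition strong_odd_coloring :: "'a set \<Rightarrow> ('a \<Rightarrow> 'a \<Rightarrow> bool) \<Rightarrow> ('a \<Rightarrow> nat) \<Rightarrow> bool" where
  "strong_odd_coloring V E c \<longleftrightarrow>
     (\<forall>u\<in>V. \<forall>v\<in>V. E u v \<longrightarrow> c u \<noteq> c v) \<and>
     (\<forall>v\<in>V. \<forall>a \<in> c ` nbhd V E v. odd (card {u \<in> nbhd V E v. c u = a}))"

definition chi_so :: "'a set \<Rightarrow> ('a \<Rightarrow> 'a \<Rightarrow> bool) \<Rightarrow> nat" where
  "chi_so V E = (LEAST k. \<exists>c. strong_odd_coloring V E c \<and> c ` V \<subseteq> {0..<k})"

(* Hoffman-Singleton graph, Robertson's construction:
   vertices (False,h,j) = vertex j of pentagon P_h, (True,i,j) = vertex j of pentagram Q_i,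
   h,i,j in Z_5. *)
definition hs_V :: "(bool \<times> nat \<times> nat) set" where
  "hs_V = UNIV \<times> {0..<5} \<times> {0..<5}"

fun hs_adj0 :: "bool \<times> nat \<times> nat \<Rightarrow> bool \<times> nat \<times> nat \<Rightarrow> bool" where
  "hs_adj0 (False, h, j) (False, h', j') \<longleftrightarrow> h = h' \<and> (j' = (j + 1) mod 5 \<or> j = (j' + 1) mod 5)"
| "hs_adj0 (True, i, j) (True, i', j') \<longleftrightarrow> i = i' \<and> (j' = (j + 2) mod 5 \<or> j = (j' + 2) mod 5)"
| "hs_adj0 (False, h, j) (True, i, k) \<longleftrightarrow> k = (h * i + j) mod 5"
| "hs_adj0 (True, i, k) (False, h, j) \<longleftrightarrow> k = (h * i + j) mod 5"

definition hs_E :: "bool \<times> nat \<times> nat \<Rightarrow> bool \<times> nat \<times> nat \<Rightarrow> bool" where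
  "hs_E u v \<longleftrightarrow> u \<in> hs_V \<and> v \<in> hs_V \<and> hs_adj0 u v"

end

theory Submission
  imports Defs
begin

(* Let S be independent with s vertices and write n v = |N(v) \<inter> S| for v \<notin> S.  In a
   k-regular graph in which any two distinct non-adjacent vertices have exactly \<mu> common
   neighbours, double counting gives  \<Sum> n v = k s  and  \<Sum> n v ^ 2 = s (k + \<mu> (s - 1)).
   Hence every pointwise inequality (n v - a)(n v - b) \<ge> 0 yields a quadratic inequality in s.
   For the Hoffman-Singleton graph (k = 7, \<mu> = 1, 50 vertices):
   (n - 3)(n - 4) \<ge> 0 holds for every integer n and gives s^2 - 55 s + 600 \<ge> 0, which fails
   for s = 16; as subsets of independent sets are independent, every independent set has at
   most 15 vertices.  For an odd independent set n v is 0 or odd, so (n - 1)(n - 3) \<ge> 0,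
   giving (s - 10)(s - 15) \<ge> 0.  An odd independent set of size 15 and a strong odd
   20-colouring are exhibited and checked by evaluation. *)

lemma consecutive_product_nonneg:
  fixes x a :: int
  shows "0 \<le> (x - a) * (x - (a + 1))"
  by (cases "x \<le> a") (auto intro: mult_nonpos_nonpos mult_nonneg_nonneg)

lemma zero_or_odd_product_nonneg:
  fixes n :: nat
  assumes "n = 0 \<or> odd n"
  shows "0 \<le> (int n - 1) * (int n - 3)"
proof -
  from assms have "n = 0 \<or> n = 1 \<or> n \<ge> 3" by presburger
  then show ?thesis by (auto intro: mult_nonneg_nonneg)
qed

lemma nbhd_inter_independent:
  assumes "independent V E S" and "v \<in> S"
  shows "nbhd V E v \<inter> S = {}"
  using assms by (auto simp: independent_def nbhd_def)

lemma odd_independent_card_nbhd_inter: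
  assumes "odd_independent V E S" and "v \<in> V"
  shows "card (nbhd V E v \<inter> S) = 0 \<or> odd (card (nbhd V E v \<inter> S))"
proof (cases "v \<in> S")
  case True
  with assms(1) show ?thesis by (simp add: odd_independent_def nbhd_inter_independent)
qed (use assms in \<open>simp add: odd_independent_def\<close>)

lemma independent_subset:
  assumes "independent V E S" and "T \<subseteq> S"
  shows "independent V E T"
  using assms by (auto simp: independent_def)

locale co_edge_regular =
  fixes V :: "'a set" and E :: "'a \<Rightarrow> 'a \<Rightarrow> bool" and k \<mu> :: nat
  assumes finite_vertices: "finite V"
    and card_in_nbrs: "u \<in> V \<Longrightarrow> card {v \<in> V. E v u} = k"
    and card_common_in_nbrs:
      "\<lbrakk>x \<in> V; y \<in> V; x \<noteq> y; \<not> E x y\<rbrakk> \<Longrightarrow> card {v \<in> V. E v x \<and> E v y} = \<mu>"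
begin

lemma sum_of_bool_vertices: "(\<Sum>v\<in>V. of_bool (P v)) = card {v \<in> V. P v}"
  using finite_vertices by (simp add: Collect_conj_eq Int_commute)

lemma card_nbhd_inter_eq_sum:
  assumes "S \<subseteq> V"
  shows "card (nbhd V E v \<inter> S) = (\<Sum>u\<in>S. of_bool (E v u))"
proof -
  have "finite S" using assms finite_vertices finite_subset by blast
  moreover have "nbhd V E v \<inter> S = S \<inter> {u. E v u}" using assms by (auto simp: nbhd_def)
  ultimately show ?thesis by simp
qed

lemma sum_card_nbhd_inter:
  assumes "S \<subseteq> V"
  shows "(\<Sum>v\<in>V. card (nbhd V E v \<inter> S)) = k * card S"
proof -
  have "(\<Sum>v\<in>V. card (nbhd V E v \<inter> S)) = (\<Sum>u\<in>S. \<Sum>v\<in>V. of_bool (E v u))"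
    unfolding card_nbhd_inter_eq_sum[OF assms] by (rule sum.swap)
  also have "\<dots> = (\<Sum>u\<in>S. k)"
    using assms by (intro sum.cong) (auto simp: sum_of_bool_vertices card_in_nbrs)
  finally show ?thesis by simp
qed

lemma sum_card_nbhd_inter_squared:
  assumes "independent V E S"
  shows "(\<Sum>v\<in>V. card (nbhd V E v \<inter> S) ^ 2) = card S * (k + \<mu> * (card S - 1))"
proof -
  have SV: "S \<subseteq> V" and finite_S: "finite S"
    using assms finite_vertices finite_subset by (auto simp: independent_def)
  have row: "(\<Sum>y\<in>S. card {v \<in> V. E v x \<and> E v y}) = k + \<mu> * (card S - 1)" if "x \<in> S" for x
  proof -
    have "(\<Sum>y\<in>S. card {v \<in> V. E v x \<and> E v y})
        = card {v \<in> V. E v x \<and> E v x} + (\<Sum>y\<in>S - {x}. card {v \<in> V. E v x \<and> E v y})"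
      using finite_S that by (simp add: sum.remove)
    also have "\<dots> = k + (\<Sum>y\<in>S - {x}. \<mu>)"
      using that SV assms unfolding independent_def
      by (intro arg_cong2[where f = "(+)"] sum.cong card_common_in_nbrs) (auto simp: card_in_nbrs)
    finally show ?thesis using finite_S that by simp
  qed
  have "(\<Sum>v\<in>V. card (nbhd V E v \<inter> S) ^ 2)
      = (\<Sum>v\<in>V. \<Sum>x\<in>S. \<Sum>y\<in>S. of_bool (E v x \<and> E v y))"
    unfolding power2_eq_square card_nbhd_inter_eq_sum[OF SV] sum_product
    by (intro sum.cong refl) auto
  also have "\<dots> = (\<Sum>x\<in>S. \<Sum>y\<in>S. \<Sum>v\<in>V. of_bool (E v x \<and> E v y))"
    by (subst sum.swap) (intro sum.cong refl sum.swap)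
  also have "\<dots> = (\<Sum>x\<in>S. k + \<mu> * (card S - 1))"
    using row by (simp add: sum_of_bool_vertices)
  finally show ?thesis by simp
qed

lemma sum_outside_independent:
  fixes g :: "nat \<Rightarrow> nat"
  assumes "independent V E S" and "g 0 = 0"
  shows "(\<Sum>v\<in>V - S. g (card (nbhd V E v \<inter> S))) = (\<Sum>v\<in>V. g (card (nbhd V E v \<inter> S)))"
  using assms finite_vertices nbhd_inter_independent[OF assms(1)]
  by (intro sum.mono_neutral_left) auto

lemma independent_card_quadratic:
  fixes a b :: int
  assumes S: "independent V E S"
    and nonneg: "\<And>v. v \<in> V - S \<Longrightarrow>
      0 \<le> (int (card (nbhd V E v \<inter> S)) - a) * (int (card (nbhd V E v \<inter> S)) - b)"
  shows "0 \<le> int (card S * (k + \<mu> * (card S - 1))) - (a + b) * int (k * card S)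
               + a * b * int (card V - card S)"
proof -
  define n where "n v = card (nbhd V E v \<inter> S)" for v
  have SV: "S \<subseteq> V" using S by (simp add: independent_def)
  have "0 \<le> (\<Sum>v\<in>V - S. (int (n v) - a) * (int (n v) - b))"
    using nonneg unfolding n_def by (rule sum_nonneg)
  also have "\<dots> = (\<Sum>v\<in>V - S. int (n v ^ 2) - (a + b) * int (n v) + a * b)"
    by (intro sum.cong refl) (simp add: algebra_simps power2_eq_square)
  also have "\<dots> = int (\<Sum>v\<in>V - S. n v ^ 2) - (a + b) * int (\<Sum>v\<in>V - S. n v)
                   + a * b * int (card (V - S))"
    by (simp add: sum.distrib sum_subtractf sum_distrib_left)
  also have "\<dots> = int (card S * (k + \<mu> * (card S - 1))) - (a + b) * int (k * card S)
                   + a * b * int (card V - card S)"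
    using sum_outside_independent[OF S, of "\<lambda>m. m ^ 2"] sum_outside_independent[OF S, of id]
      sum_card_nbhd_inter_squared[OF S] sum_card_nbhd_inter[OF SV] finite_vertices SV
    by (simp add: n_def card_Diff_subset finite_subset)
  finally show ?thesis .
qed

end

definition hs_vertex_list :: "(bool \<times> nat \<times> nat) list" where
  "hs_vertex_list = List.product [False, True] (List.product [0..<5] [0..<5])"

lemma set_hs_vertex_list: "set hs_vertex_list = hs_V"
  unfolding hs_V_def hs_vertex_list_def set_product by (simp add: UNIV_bool)

lemma distinct_hs_vertex_list: "distinct hs_vertex_list"
  by code_simp

lemma finite_hs_V: "finite hs_V"
  unfolding set_hs_vertex_list[symmetric] by simp

lemma card_hs_V: "card hs_V = 50"
  unfolding set_hs_vertex_list[symmetric] distinct_card[OF distinct_hs_vertex_list]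
  by (simp add: hs_vertex_list_def)

lemma card_hs_V_filter: "card {v \<in> hs_V. P v} = length (filter P hs_vertex_list)"
proof -
  have "{v \<in> hs_V. P v} = set (filter P hs_vertex_list)"
    by (auto simp: set_hs_vertex_list)
  then show ?thesis by (simp only: distinct_card[OF distinct_filter[OF distinct_hs_vertex_list]])
qed

lemma nbhd_hs:
  assumes "v \<in> hs_V"
  shows "nbhd hs_V hs_E v = set (filter (hs_adj0 v) hs_vertex_list)"
  using assms by (auto simp: nbhd_def hs_E_def set_hs_vertex_list)

lemma hs_parameters_by_evaluation:
  "list_all (\<lambda>u. length (filter (\<lambda>v. hs_adj0 v u) hs_vertex_list) = 7) hs_vertex_list"
  "list_all (\<lambda>x. list_all (\<lambda>y. x = y \<or> hs_adj0 x y \<or>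
     length (filter (\<lambda>v. hs_adj0 v x \<and> hs_adj0 v y) hs_vertex_list) = 1) hs_vertex_list)
     hs_vertex_list"
  by code_simp+

interpretation hs: co_edge_regular hs_V hs_E 7 1
proof
  fix u assume "u \<in> hs_V"
  then have "{v \<in> hs_V. hs_E v u} = {v \<in> hs_V. hs_adj0 v u}" by (auto simp: hs_E_def)
  with \<open>u \<in> hs_V\<close> hs_parameters_by_evaluation(1) show "card {v \<in> hs_V. hs_E v u} = 7"
    by (simp add: card_hs_V_filter list_all_iff set_hs_vertex_list)
next
  fix x y assume xy: "x \<in> hs_V" "y \<in> hs_V" "x \<noteq> y" "\<not> hs_E x y"
  then have "{v \<in> hs_V. hs_E v x \<and> hs_E v y} = {v \<in> hs_V. hs_adj0 v x \<and> hs_adj0 v y}"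
    by (auto simp: hs_E_def)
  with xy hs_parameters_by_evaluation(2) show "card {v \<in> hs_V. hs_E v x \<and> hs_E v y} = 1"
    by (auto simp: card_hs_V_filter list_all_iff set_hs_vertex_list hs_E_def)
qed (fact finite_hs_V)

lemma hs_independent_card_le:
  assumes "independent hs_V hs_E S"
  shows "card S \<le> 15"
proof (rule ccontr)
  assume "\<not> card S \<le> 15"
  then obtain T where "T \<subseteq> S" and card_T: "card T = 16"
    using obtain_subset_with_card_n[of 16 S] by auto
  have T: "independent hs_V hs_E T" using assms \<open>T \<subseteq> S\<close> by (rule independent_subset)
  have "0 \<le> int (card T * (7 + 1 * (card T - 1))) - (3 + 4) * int (7 * card T)
              + 3 * 4 * int (card hs_V - card T)"
    by (rule hs.independent_card_quadratic[OF T])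
      (use consecutive_product_nonneg[where a = 3] in simp)
  then show False by (simp add: card_T card_hs_V)
qed

lemma hs_odd_independent_card:
  assumes "odd_independent hs_V hs_E S"
  shows "card S \<le> 10 \<or> card S = 15"
proof -
  have S: "independent hs_V hs_E S" using assms by (simp add: odd_independent_def)
  have "0 \<le> int (card S * (7 + 1 * (card S - 1))) - (1 + 3) * int (7 * card S)
              + 1 * 3 * int (card hs_V - card S)"
    by (rule hs.independent_card_quadratic[OF S])
      (use zero_or_odd_product_nonneg odd_independent_card_nbhd_inter[OF assms] in blast)
  moreover have "card S \<le> 15" using S by (rule hs_independent_card_le)
  then have "card S \<le> 10 \<or> card S = 15 \<or> card S \<in> {11, 12, 13, 14}" by auto
  ultimately show ?thesis unfolding card_hs_V by auto
qed

definition hs_odd_independent_witness :: "(bool \<times> nat \<times> nat) list" where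
  "hs_odd_independent_witness =
    [(False, 0, 0), (False, 0, 2), (False, 1, 0), (False, 1, 2), (False, 2, 1), (False, 2, 3),
     (False, 3, 0), (False, 3, 3), (False, 4, 1), (False, 4, 3), (True, 0, 4), (True, 1, 4),
     (True, 2, 3), (True, 3, 1), (True, 4, 3)]"

lemma hs_odd_independent_witness_by_evaluation:
  "distinct hs_odd_independent_witness \<and>
   list_all (\<lambda>u. u \<in> set hs_vertex_list) hs_odd_independent_witness \<and>
   list_all (\<lambda>u. list_all (\<lambda>v. \<not> hs_adj0 u v) hs_odd_independent_witness)
     hs_odd_independent_witness \<and>
   list_all (\<lambda>v. v \<in> set hs_odd_independent_witness \<or>
     odd (length (filter (hs_adj0 v) hs_odd_independent_witness))) hs_vertex_list"
  by code_simp

lemma hs_odd_independent_witness: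
  "odd_independent hs_V hs_E (set hs_odd_independent_witness)"
  "card (set hs_odd_independent_witness) = 15"
proof -
  let ?W = hs_odd_independent_witness
  have distinct: "distinct ?W" and W_sub: "set ?W \<subseteq> hs_V"
    and no_edge: "\<And>u v. u \<in> set ?W \<Longrightarrow> v \<in> set ?W \<Longrightarrow> \<not> hs_adj0 u v"
    and odd_count: "\<And>v. v \<in> hs_V - set ?W \<Longrightarrow> odd (length (filter (hs_adj0 v) ?W))"
    using hs_odd_independent_witness_by_evaluation
    unfolding list_all_iff set_hs_vertex_list by auto
  show "card (set ?W) = 15"
    using distinct by (simp add: distinct_card hs_odd_independent_witness_def)
  have "nbhd hs_V hs_E v \<inter> set ?W = set (filter (hs_adj0 v) ?W)" if "v \<in> hs_V" for v
    using that W_sub by (auto simp: nbhd_hs set_hs_vertex_list)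
  with odd_count have "odd (card (nbhd hs_V hs_E v \<inter> set ?W))" if "v \<in> hs_V - set ?W" for v
    using that by (simp only: distinct_card[OF distinct_filter[OF distinct]] Diff_iff)
  then show "odd_independent hs_V hs_E (set ?W)"
    using W_sub no_edge by (auto simp: odd_independent_def independent_def hs_E_def)
qed

definition hs_coloring_table :: "nat list" where
  "hs_coloring_table =
    [13, 19, 6, 5, 6, 3, 8, 3, 1, 11, 14, 0, 2, 8, 4, 8, 1, 0, 16, 15, 10, 12, 15, 11, 12,
     4, 3, 18, 6, 9, 19, 1, 3, 2, 18, 16, 18, 15, 12, 11, 19, 8, 8, 16, 3, 5, 5, 0, 4, 2]"

fun hs_coloring :: "bool \<times> nat \<times> nat \<Rightarrow> nat" where
  "hs_coloring (b, h, j) = hs_coloring_table ! ((if b then 25 else 0) + 5 * h + j)"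

lemma hs_coloring_by_evaluation:
  "list_all (\<lambda>v. hs_coloring v < 20) hs_vertex_list \<and>
   list_all (\<lambda>u. list_all (\<lambda>v. hs_adj0 u v \<longrightarrow> hs_coloring u \<noteq> hs_coloring v)
     hs_vertex_list) hs_vertex_list \<and>
   list_all (\<lambda>v. list_all (\<lambda>u. odd (length (filter (\<lambda>w. hs_coloring w = hs_coloring u)
     (filter (hs_adj0 v) hs_vertex_list)))) (filter (hs_adj0 v) hs_vertex_list)) hs_vertex_list"
  by code_simp

lemma hs_strong_odd_coloring:
  "strong_odd_coloring hs_V hs_E hs_coloring" "hs_coloring ` hs_V \<subseteq> {0..<20}"
proof -
  let ?N = "\<lambda>v. filter (hs_adj0 v) hs_vertex_list"
  have range: "\<And>v. v \<in> hs_V \<Longrightarrow> hs_coloring v < 20"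
    and proper: "\<And>u v. \<lbrakk>u \<in> hs_V; v \<in> hs_V; hs_adj0 u v\<rbrakk> \<Longrightarrow> hs_coloring u \<noteq> hs_coloring v"
    and odd_count: "\<And>v u. v \<in> hs_V \<Longrightarrow> u \<in> set (?N v) \<Longrightarrow>
      odd (length (filter (\<lambda>w. hs_coloring w = hs_coloring u) (?N v)))"
    using hs_coloring_by_evaluation unfolding list_all_iff set_hs_vertex_list by auto
  show "hs_coloring ` hs_V \<subseteq> {0..<20}" using range by auto
  have "odd (card {u \<in> nbhd hs_V hs_E v. hs_coloring u = a})"
    if v: "v \<in> hs_V" and a: "a \<in> hs_coloring ` nbhd hs_V hs_E v" for v a
  proof -
    obtain u where u: "u \<in> set (?N v)" and a_eq: "a = hs_coloring u"
      using a unfolding nbhd_hs[OF v] by auto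
    have "{u \<in> nbhd hs_V hs_E v. hs_coloring u = a}
        = set (filter (\<lambda>w. hs_coloring w = hs_coloring u) (?N v))"
      unfolding nbhd_hs[OF v] a_eq by auto
    with odd_count[OF v u] show ?thesis
      by (simp only: distinct_card[OF distinct_filter[OF distinct_filter[OF distinct_hs_vertex_list]]]
          not_False_eq_True)
  qed
  then show "strong_odd_coloring hs_V hs_E hs_coloring"
    unfolding strong_odd_coloring_def using proper by (auto simp: hs_E_def)
qed

theorem proposition9:
  shows "alpha_od hs_V hs_E = 15 \<and> chi_so hs_V hs_E \<le> 20 \<and>
         (\<forall>S. odd_independent hs_V hs_E S \<longrightarrow> \<not> (11 \<le> card S \<and> card S \<le> 14))"
proof (intro conjI allI impI)
  have card_le: "card S \<le> 15" if "odd_independent hs_V hs_E S" for S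
    using that hs_independent_card_le by (simp add: odd_independent_def)
  have "finite {card S | S. odd_independent hs_V hs_E S}"
    by (rule finite_subset[of _ "{..15}"]) (use card_le in auto)
  then show "alpha_od hs_V hs_E = 15"
    unfolding alpha_od_def
    by (rule Max_eqI) (use card_le hs_odd_independent_witness in auto)
  show "chi_so hs_V hs_E \<le> 20"
    unfolding chi_so_def by (rule Least_le) (use hs_strong_odd_coloring in blast)
  fix S assume "odd_independent hs_V hs_E S"
  then show "\<not> (11 \<le> card S \<and> card S \<le> 14)"
    using hs_odd_independent_card by fastforce
qed

end
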